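(* Let $\pi_1,\dots,\pi_n,\pi_{n+1}\ge 0$ with $\pi_i>0$ for some $i\le n$, and let $\boldsymbol P\in\mathcal R_{n+1}$ with $0<\Pr[P_{n+1}=0]<1$. Define the active-administrator compensations $W_i^{\mathrm{active}}=\big(\sum_{j=1}^{n+1}\pi_j\big)P_i$ for $i=1,\dots,n+1$, and the passive-administrator compensations (for the investment vector $(\pi_1,\dots,\pi_n,0)$) $W_i^{\mathrm{passive}}=\big(\sum_{j=1}^{n}\pi_j\big)P_i+\pi_iP_{n+1}$ for $i=1,\dots,n$. Then the following are equivalent: (a) $\pi_i=E[W_i^{\mathrm{active}}]$ for $i=1,\dots,n$; (b) $\pi_i=E[W_i^{\mathrm{passive}}]$ for $i=1,\dots,n$, and $\pi_{n+1}=E[W_{n+1}^{\mathrm{active}}]$.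
   Context: All random variables live on a probability space $(\Omega,\mathcal F,\Pr)$; $L^0_+$ denotes the non-negative random variables. The set of relative compensation vectors is $$\mathcal R_{n+1}=\Big\{(P_1,\dots,P_{n+1})\in (L^0_+)^{n+1}:\ \sum_{j=1}^{n+1}P_j=1,\ P_{n+1}=\mathbf 1\Big(\sum_{j=1}^nP_j=0\Big)\Big\},$$ where $\mathbf 1(A)$ denotes the indicator of the event $A$. *)

theory Defs
  imports "HOL-Probability.Probability"
begin

text \<open>Components are indexed 1..n+1; elements of L^0 are identified up to
  almost-sure equality, so the defining equalities hold almost surely.\<close>
definition rel_comp :: "'a measure \<Rightarrow> nat \<Rightarrow> (nat \<Rightarrow> 'a \<Rightarrow> real) \<Rightarrow> bool" where
  "rel_comp M n P \<longleftrightarrow>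
     (\<forall>j\<in>{1..n+1}. P j \<in> borel_measurable M \<and> (AE x in M. 0 \<le> P j x)) \<and>
     (AE x in M. (\<Sum>j=1..n+1. P j x) = 1) \<and>
     (AE x in M. P (n+1) x = (if (\<Sum>j=1..n. P j x) = 0 then 1 else 0))"

end

theory Submission
  imports Defs
begin

text \<open>Write \<open>e\<^sub>i = E[P\<^sub>i]\<close> and \<open>q = E[P\<^sub>n\<^sub>+\<^sub>1] = 1 - Pr[P\<^sub>n\<^sub>+\<^sub>1 = 0]\<close>, so that
  \<open>e\<^sub>1 + \<dots> + e\<^sub>n = 1 - q\<close>. Taking expectations, (a) and (b) become linear equations in the
  \<open>\<pi>\<^sub>i\<close>. Summing (a) over \<open>i \<le> n\<close> gives \<open>S = (S + \<pi>\<^sub>n\<^sub>+\<^sub>1)(1 - q)\<close> with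
  \<open>S = \<pi>\<^sub>1 + \<dots> + \<pi>\<^sub>n\<close>, which is the last equation of (b); given it, the \<open>i\<close>-th equation
  of (a) times \<open>1 - q\<close> is the \<open>i\<close>-th equation of (b), and \<open>1 - q = Pr[P\<^sub>n\<^sub>+\<^sub>1 = 0] > 0\<close>.\<close>

lemma active_iff_passive_shares:
  fixes \<pi> e :: "nat \<Rightarrow> real"
  assumes shares: "(\<Sum>i=1..n. e i) = 1 - q" and "q \<noteq> 1"
  shows "(\<forall>i\<in>{1..n}. \<pi> i = (\<Sum>j=1..n+1. \<pi> j) * e i) \<longleftrightarrow>
         ((\<forall>i\<in>{1..n}. \<pi> i = (\<Sum>j=1..n. \<pi> j) * e i + \<pi> i * q)
          \<and> \<pi> (n+1) = (\<Sum>j=1..n+1. \<pi> j) * q)"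
proof -
  define S where "S = (\<Sum>j=1..n. \<pi> j)"
  have total: "(\<Sum>j=1..n+1. \<pi> j) = S + \<pi> (n+1)"
    by (simp add: S_def)
  have "(\<forall>i\<in>{1..n}. \<pi> i = (S + \<pi> (n+1)) * e i) \<longleftrightarrow>
        ((\<forall>i\<in>{1..n}. \<pi> i = S * e i + \<pi> i * q) \<and> \<pi> (n+1) = (S + \<pi> (n+1)) * q)"
  proof
    assume active_eqs: "\<forall>i\<in>{1..n}. \<pi> i = (S + \<pi> (n+1)) * e i"
    have "(\<Sum>i=1..n. \<pi> i) = (\<Sum>i=1..n. (S + \<pi> (n+1)) * e i)"
      using active_eqs by (intro sum.cong) auto
    then have "S = (\<Sum>i=1..n. (S + \<pi> (n+1)) * e i)"
      by (simp only: S_def)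
    also have "\<dots> = (S + \<pi> (n+1)) * (1 - q)"
      by (simp only: sum_distrib_left[symmetric] shares)
    finally have budget: "S = (S + \<pi> (n+1)) * (1 - q)" .
    then have "\<pi> i = S * e i + \<pi> i * q" if "\<pi> i = (S + \<pi> (n+1)) * e i" for i
      using that by algebra
    with active_eqs budget
    show "(\<forall>i\<in>{1..n}. \<pi> i = S * e i + \<pi> i * q) \<and> \<pi> (n+1) = (S + \<pi> (n+1)) * q"
      by (auto simp: algebra_simps)
  next
    assume passive_eqs:
      "(\<forall>i\<in>{1..n}. \<pi> i = S * e i + \<pi> i * q) \<and> \<pi> (n+1) = (S + \<pi> (n+1)) * q"
    then have budget: "S = (S + \<pi> (n+1)) * (1 - q)"
      by algebra
    show "\<forall>i\<in>{1..n}. \<pi> i = (S + \<pi> (n+1)) * e i"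
    proof
      fix i assume "i \<in> {1..n}"
      with passive_eqs have "\<pi> i = S * e i + \<pi> i * q"
        by auto
      then have "\<pi> i * (1 - q) = S * e i"
        by algebra
      also have "\<dots> = (S + \<pi> (n+1)) * e i * (1 - q)"
        using budget by algebra
      finally show "\<pi> i = (S + \<pi> (n+1)) * e i"
        using \<open>q \<noteq> 1\<close> by simp
    qed
  qed
  then show ?thesis
    by (simp only: total S_def)
qed

lemma rel_comp_AE_bounds:
  assumes "rel_comp M n P"
  shows "AE x in M. \<forall>j\<in>{1..n+1}. 0 \<le> P j x \<and> P j x \<le> 1"
proof -
  have "AE x in M. \<forall>j\<in>{1..n+1}. 0 \<le> P j x"
    using assms unfolding rel_comp_def by (intro AE_finite_allI) auto
  moreover have "AE x in M. (\<Sum>j=1..n+1. P j x) = 1"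
    using assms unfolding rel_comp_def by auto
  ultimately show ?thesis
  proof eventually_elim
    case (elim x)
    have "P j x \<le> (\<Sum>k=1..n+1. P k x)" if "j \<in> {1..n+1}" for j
      using that elim(1) by (intro member_le_sum) auto
    with elim show ?case
      by auto
  qed
qed

context prob_space
begin

lemma rel_comp_integrable:
  assumes "rel_comp M n P" and "j \<in> {1..n+1}"
  shows "integrable M (P j)"
proof (rule integrable_const_bound[where B=1])
  show "AE x in M. norm (P j x) \<le> 1"
    using rel_comp_AE_bounds[OF assms(1)] by eventually_elim (use assms(2) in auto)
  show "P j \<in> borel_measurable M"
    using assms unfolding rel_comp_def by auto
qed

lemma rel_comp_expectation_sum:
  assumes "rel_comp M n P"
  shows "(\<Sum>j=1..n+1. expectation (P j)) = 1"
proof -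
  have "(\<Sum>j=1..n+1. expectation (P j)) = expectation (\<lambda>x. \<Sum>j=1..n+1. P j x)"
    using rel_comp_integrable[OF assms] by (intro Bochner_Integration.integral_sum[symmetric]) auto
  also have "\<dots> = expectation (\<lambda>x. 1)"
    using assms unfolding rel_comp_def by (intro integral_cong_AE borel_measurable_sum) auto
  finally show ?thesis
    by (simp add: prob_space)
qed

lemma rel_comp_expectation_last:
  assumes "rel_comp M n P"
  shows "expectation (P (n+1)) = 1 - prob {x\<in>space M. P (n+1) x = 0}"
proof -
  let ?A = "{x\<in>space M. P (n+1) x = 0}"
  have measurable: "P (n+1) \<in> borel_measurable M"
    and indicator: "AE x in M. P (n+1) x = (if (\<Sum>j=1..n. P j x) = 0 then 1 else 0)"
    using assms unfolding rel_comp_def by auto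
  then have "?A \<in> events"
    by measurable
  have "expectation (\<lambda>x. 1 - P (n+1) x) = expectation (indicator ?A)"
  proof (rule integral_cong_AE)
    show "AE x in M. 1 - P (n+1) x = indicator ?A x"
      using indicator AE_space by eventually_elim (auto simp: indicator_def)
  qed (use measurable \<open>?A \<in> events\<close> in auto)
  then have "1 - expectation (P (n+1)) = prob ?A"
    using rel_comp_integrable[OF assms, of "n+1"] \<open>?A \<in> events\<close> by (simp add: prob_space)
  then show ?thesis
    by simp
qed

end

theorem corollary1:
  fixes M :: "'a measure" and n :: nat and \<pi> :: "nat \<Rightarrow> real"
    and P :: "nat \<Rightarrow> 'a \<Rightarrow> real"
  assumes "prob_space M"
    and "\<forall>j\<in>{1..n+1}. 0 \<le> \<pi> j"
    and "\<exists>i\<in>{1..n}. 0 < \<pi> i"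
    and "rel_comp M n P"
    and "0 < measure M {x\<in>space M. P (n+1) x = 0}"
    and "measure M {x\<in>space M. P (n+1) x = 0} < 1"
  shows "(\<forall>i\<in>{1..n}. \<pi> i = prob_space.expectation M (\<lambda>x. (\<Sum>j=1..n+1. \<pi> j) * P i x))
     \<longleftrightarrow>
     ((\<forall>i\<in>{1..n}. \<pi> i = prob_space.expectation M
                           (\<lambda>x. (\<Sum>j=1..n. \<pi> j) * P i x + \<pi> i * P (n+1) x))
      \<and> \<pi> (n+1) = prob_space.expectation M (\<lambda>x. (\<Sum>j=1..n+1. \<pi> j) * P (n+1) x))"
proof -
  interpret prob_space M by fact
  define e where "e j = expectation (P j)" for j
  have shares: "(\<Sum>i=1..n. e i) = 1 - e (n+1)"
    using rel_comp_expectation_sum[OF assms(4)] by (simp add: e_def)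
  have "e (n+1) \<noteq> 1"
    using rel_comp_expectation_last[OF assms(4)] assms(5) by (simp add: e_def)
  have passive_expectation: "expectation (\<lambda>x. (\<Sum>j=1..n. \<pi> j) * P i x + \<pi> i * P (n+1) x)
      = (\<Sum>j=1..n. \<pi> j) * e i + \<pi> i * e (n+1)" if "i \<in> {1..n}" for i
    using that rel_comp_integrable[OF assms(4), of i] rel_comp_integrable[OF assms(4), of "n+1"]
    by (simp add: e_def)
  then have "(\<forall>i\<in>{1..n}. \<pi> i = expectation (\<lambda>x. (\<Sum>j=1..n. \<pi> j) * P i x + \<pi> i * P (n+1) x))
      \<longleftrightarrow> (\<forall>i\<in>{1..n}. \<pi> i = (\<Sum>j=1..n. \<pi> j) * e i + \<pi> i * e (n+1))"
    by auto
  with active_iff_passive_shares[OF shares \<open>e (n+1) \<noteq> 1\<close>, of \<pi>] show ?thesis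
    by (simp add: e_def)
qed

end
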